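(* Let $(X,d)$ be a compact metric space and let $f\in\mathcal{H}(X)$ be equicontinuous. If $f$ has the strict periodic shadowing property, then $f$ is topologically stable and $\dim X=0$.
   Context: $\mathcal{H}(X)$ is the set of homeomorphisms; $d_{C^0}(f,g)=\sup_x d(f(x),g(x))$; $D(f,g)=\max\{d_{C^0}(f,g),d_{C^0}(f^{-1},g^{-1})\}$. $f$ is equicontinuous if for every $\epsilon>0$ there is $\delta>0$ such that $d(x,y)\le\delta$ implies $\sup_{i\in\mathbb{Z}}d(f^i(x),f^i(y))\le\epsilon$. A $\delta$-cycle is a sequence $(x_i)_{i=0}^m$, $m\ge1$, with $d(f(x_i),x_{i+1})\le\delta$ for $0\le i<m$ and $x_0=x_m$. $f$ has the strict periodic shadowing property if for every $\epsilon>0$ there is $\delta>0$ such that for every $\delta$-cycle $(x_i)_{i=0}^m$ there is $p$ with $f^m(p)=p$ and $d(x_i,f^i(p))\le\epsilon$ for $0\le i\le m$. $f$ is topologically stable if for every $\epsilon>0$ there is $\delta>0$ such that for every $g\in\mathcal{H}(X)$ with $D(f,g)<\delta$ there is a continuous $h:X\to X$ with $d_{C^0}(h,\mathrm{id}_X)<\epsilon$ and $h\circ g=f\circ h$. *)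

theory Defs
  imports "HOL-Analysis.Analysis"
begin

text \<open>Homeomorphisms of the whole space (the compact metric space X is the type 'a).\<close>
definition is_homeo :: "('a::topological_space \<Rightarrow> 'a) \<Rightarrow> bool" where
  "is_homeo f \<longleftrightarrow> (\<exists>g. homeomorphism UNIV UNIV f g)"

definition dC0 :: "('a \<Rightarrow> 'b::metric_space) \<Rightarrow> ('a \<Rightarrow> 'b) \<Rightarrow> real" where
  "dC0 f g = (SUP x. dist (f x) (g x))"

definition Dhom :: "('a \<Rightarrow> 'a::metric_space) \<Rightarrow> ('a \<Rightarrow> 'a) \<Rightarrow> real" where
  "Dhom f g = max (dC0 f g) (dC0 (inv f) (inv g))"

definition iter_int :: "('a \<Rightarrow> 'a) \<Rightarrow> int \<Rightarrow> 'a \<Rightarrow> 'a" where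
  "iter_int f i = (if 0 \<le> i then f ^^ nat i else inv f ^^ nat (- i))"

definition equicontinuous_homeo :: "('a::metric_space \<Rightarrow> 'a) \<Rightarrow> bool" where
  "equicontinuous_homeo f \<longleftrightarrow>
     (\<forall>\<epsilon>>0. \<exists>\<delta>>0. \<forall>x y. dist x y \<le> \<delta> \<longrightarrow>
        (SUP i::int. dist (iter_int f i x) (iter_int f i y)) \<le> \<epsilon>)"

definition delta_cycle :: "('a::metric_space \<Rightarrow> 'a) \<Rightarrow> real \<Rightarrow> (nat \<Rightarrow> 'a) \<Rightarrow> nat \<Rightarrow> bool" where
  "delta_cycle f \<delta> xs m \<longleftrightarrow> m \<ge> 1 \<and> (\<forall>i<m. dist (f (xs i)) (xs (Suc i)) \<le> \<delta>) \<and> xs 0 = xs m"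

definition strict_periodic_shadowing :: "('a::metric_space \<Rightarrow> 'a) \<Rightarrow> bool" where
  "strict_periodic_shadowing f \<longleftrightarrow>
     (\<forall>\<epsilon>>0. \<exists>\<delta>>0. \<forall>xs m. delta_cycle f \<delta> xs m \<longrightarrow>
        (\<exists>p. (f ^^ m) p = p \<and> (\<forall>i\<le>m. dist (xs i) ((f ^^ i) p) \<le> \<epsilon>)))"

definition topologically_stable :: "('a::metric_space \<Rightarrow> 'a) \<Rightarrow> bool" where
  "topologically_stable f \<longleftrightarrow>
     (\<forall>\<epsilon>>0. \<exists>\<delta>>0. \<forall>g. is_homeo g \<and> Dhom f g < \<delta> \<longrightarrow>
        (\<exists>h. continuous_on UNIV h \<and> dC0 h id < \<epsilon> \<and> h \<circ> g = f \<circ> h))"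

text \<open>Lebesgue covering dimension of the (nonempty) whole space is 0: every finite open
  cover has a finite open refinement consisting of pairwise disjoint sets that covers the space.\<close>
definition covering_dim_zero :: "'a::topological_space itself \<Rightarrow> bool" where
  "covering_dim_zero _ \<longleftrightarrow> (UNIV :: 'a set) \<noteq> {} \<and>
     (\<forall>\<U>::'a set set. finite \<U> \<and> (\<forall>U\<in>\<U>. open U) \<and> \<Union>\<U> = UNIV \<longrightarrow>
        (\<exists>\<V>. finite \<V> \<and> (\<forall>V\<in>\<V>. open V) \<and> \<Union>\<V> = UNIV \<and>
             (\<forall>V\<in>\<V>. \<exists>U\<in>\<U>. V \<subseteq> U) \<and>
             (\<forall>V\<in>\<V>. \<forall>W\<in>\<V>. V \<noteq> W \<longrightarrow> V \<inter> W = {})))"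

end

theory Submission
  imports Defs
begin

text \<open>For \<open>\<rho> > 0\<close> let \<open>\<sim>\<close> be the equivalence relation generated by "the forward orbits of a and
  b stay \<open>\<rho>\<close>-close". Equicontinuity makes its classes open and f-invariant and makes f uniformly
  recurrent, so f permutes the finitely many classes in cycles. Strict periodic shadowing makes the
  classes small: a chain from a to b, traversed forward, back again and closed up by recurrence, is a
  pseudo-cycle, and its shadowing periodic orbit brings \<open>f\<^sup>k a\<close> and \<open>f\<^sup>k b\<close> together, hence also
  a and b by equicontinuity of the inverse. A partition of X into small open sets gives
  \<open>dim X = 0\<close>. Choosing for each cycle of classes a periodic orbit shadowing it and sending each class
  to the corresponding point of that orbit gives a locally constant h near the identity with
  \<open>h \<circ> f = f \<circ> h\<close>; since \<open>g x \<sim> f x\<close> for g close to f, also \<open>h \<circ> g = f \<circ> h\<close>.\<close>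

section \<open>Criteria for topological stability and zero dimension\<close>

lemma bdd_above_range_dist:
  fixes u v :: "'b \<Rightarrow> 'a::metric_space"
  assumes "bounded (UNIV :: 'a set)"
  shows "bdd_above (range (\<lambda>i. dist (u i) (v i)))"
  using assms diameter_bounded_bound by (intro bdd_aboveI) blast

lemma dist_le_dC0:
  fixes u v :: "'b \<Rightarrow> 'a::metric_space"
  assumes "bounded (UNIV :: 'a set)"
  shows "dist (u x) (v x) \<le> dC0 u v"
  unfolding dC0_def using bdd_above_range_dist[OF assms] by (rule cSUP_upper[OF UNIV_I])

lemma dC0_le:
  assumes "\<And>x. dist (u x) (v x) \<le> c"
  shows "dC0 u v \<le> c"
  unfolding dC0_def using assms by (intro cSUP_least) auto

text \<open>If h is constant at scale \<open>\<tau>\<close>, then \<open>h \<circ> g = h \<circ> f = f \<circ> h\<close> for every g uniformly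
  \<open>\<tau>\<close>-close to f, whether or not g is a homeomorphism.\<close>
lemma topologically_stableI_locally_constant:
  fixes f :: "'a::metric_space \<Rightarrow> 'a"
  assumes bounded: "bounded (UNIV :: 'a set)"
    and conj: "\<And>\<epsilon>. \<epsilon> > 0 \<Longrightarrow> \<exists>\<tau>>0. \<exists>h. (\<forall>x y. dist x y < \<tau> \<longrightarrow> h x = h y) \<and>
                  (\<forall>x. dist (h x) x \<le> \<epsilon>) \<and> h \<circ> f = f \<circ> h"
  shows "topologically_stable f"
  unfolding topologically_stable_def
proof (intro allI impI)
  fix \<epsilon> :: real
  assume "\<epsilon> > 0"
  then obtain \<tau> h where "\<tau> > 0" and const: "\<And>x y. dist x y < \<tau> \<Longrightarrow> h x = h y"
    and near: "\<And>x. dist (h x) x \<le> \<epsilon>/2" and comm: "h \<circ> f = f \<circ> h"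
    using conj[of "\<epsilon>/2"] by auto
  show "\<exists>\<delta>>0. \<forall>g. is_homeo g \<and> Dhom f g < \<delta> \<longrightarrow>
          (\<exists>h. continuous_on UNIV h \<and> dC0 h id < \<epsilon> \<and> h \<circ> g = f \<circ> h)"
  proof (intro exI conjI allI impI)
    fix g :: "'a \<Rightarrow> 'a"
    assume "is_homeo g \<and> Dhom f g < \<tau>"
    then have "dist (g x) (f x) < \<tau>" for x
      using dist_le_dC0[OF bounded, of f x g] by (simp add: Dhom_def dist_commute)
    then have "h (g x) = f (h x)" for x
      using const comm by (metis comp_apply)
    then show "h \<circ> g = f \<circ> h"
      by auto
    show "continuous_on UNIV h"
      unfolding continuous_on_iff using \<open>\<tau> > 0\<close> const by force
    show "dC0 h id < \<epsilon>"
      using dC0_le[of h id "\<epsilon>/2"] near \<open>\<epsilon> > 0\<close> by simp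
  qed (rule \<open>\<tau> > 0\<close>)
qed

lemma equivp_Collect_eq:
  assumes "equivp R" "R x y"
  shows "Collect (R x) = Collect (R y)"
proof -
  have "R x = R y"
    using assms unfolding equivp_def by blast
  then show ?thesis
    by simp
qed

lemma diameter_le_dist:
  fixes S :: "'a::metric_space set"
  assumes "S \<noteq> {}" "\<And>x y. x \<in> S \<Longrightarrow> y \<in> S \<Longrightarrow> dist x y \<le> d"
  shows "diameter S \<le> d"
  using assms by (auto simp: diameter_def intro!: cSUP_least)

lemma diameter_equivp_class_le:
  fixes R :: "'a::metric_space \<Rightarrow> 'a \<Rightarrow> bool"
  assumes "equivp R" "\<And>x y. R x y \<Longrightarrow> dist x y \<le> e"
  shows "diameter (Collect (R x)) \<le> e"
proof (rule diameter_le_dist)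
  show "Collect (R x) \<noteq> {}"
    using equivp_reflp[OF assms(1)] by blast
  fix a b
  assume "a \<in> Collect (R x)" "b \<in> Collect (R x)"
  then have "R a b"
    using equivp_symp[OF assms(1)] equivp_transp[OF assms(1)] by (metis mem_Collect_eq)
  then show "dist a b \<le> e"
    by (rule assms(2))
qed

lemma finite_open_classes:
  assumes "compact (UNIV :: 'a::topological_space set)" "equivp R"
    and "\<And>x. open (Collect (R x))"
  shows "finite (range (\<lambda>x::'a. Collect (R x)))"
proof -
  have "UNIV \<subseteq> \<Union>(range (\<lambda>x. Collect (R x)))"
    using equivp_reflp[OF assms(2)] by blast
  then obtain \<V> where \<V>: "\<V> \<subseteq> range (\<lambda>x. Collect (R x))" "finite \<V>" "UNIV \<subseteq> \<Union>\<V>"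
    by (rule compactE[OF assms(1)]) (use assms(3) in auto)
  have "range (\<lambda>x. Collect (R x)) \<subseteq> \<V>"
  proof clarify
    fix x
    obtain V where "V \<in> \<V>" "x \<in> V"
      using \<V>(3) by blast
    moreover obtain y where "V = Collect (R y)"
      using \<V>(1) \<open>V \<in> \<V>\<close> by blast
    ultimately have "Collect (R y) = Collect (R x)"
      using equivp_Collect_eq[OF assms(2), of y x] by blast
    then show "Collect (R x) \<in> \<V>"
      using \<open>V \<in> \<V>\<close> \<open>V = Collect (R y)\<close> by simp
  qed
  then show ?thesis
    using \<V>(2) by (rule finite_subset)
qed

lemma covering_dim_zeroI_open_equivp:
  assumes compact: "compact (UNIV :: 'a::metric_space set)"
    and fine: "\<And>e. e > 0 \<Longrightarrow>
      \<exists>R::'a \<Rightarrow> 'a \<Rightarrow> bool. equivp R \<and> (\<forall>x. open (Collect (R x))) \<and> (\<forall>x y. R x y \<longrightarrow> dist x y \<le> e)"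
  shows "covering_dim_zero TYPE('a)"
  unfolding covering_dim_zero_def
proof (intro conjI allI impI)
  fix \<U> :: "'a set set"
  assume \<U>: "finite \<U> \<and> (\<forall>U\<in>\<U>. open U) \<and> \<Union>\<U> = UNIV"
  obtain r where "r > 0" and lebesgue: "\<And>T. diameter T < r \<Longrightarrow> \<exists>U\<in>\<U>. T \<subseteq> U"
  proof (rule Lebesgue_number_lemma[OF compact, of \<U>])
    show "\<U> \<noteq> {}" "UNIV \<subseteq> \<Union>\<U>" "\<And>U. U \<in> \<U> \<Longrightarrow> open U"
      using \<U> by auto
  qed auto
  obtain R :: "'a \<Rightarrow> 'a \<Rightarrow> bool" where R: "equivp R" and opn: "\<And>x. open (Collect (R x))"
    and small: "\<And>x y. R x y \<Longrightarrow> dist x y \<le> r/2"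
    using fine[OF half_gt_zero[OF \<open>r > 0\<close>]] by blast
  show "\<exists>\<V>. finite \<V> \<and> (\<forall>V\<in>\<V>. open V) \<and> \<Union>\<V> = UNIV \<and> (\<forall>V\<in>\<V>. \<exists>U\<in>\<U>. V \<subseteq> U) \<and>
          (\<forall>V\<in>\<V>. \<forall>W\<in>\<V>. V \<noteq> W \<longrightarrow> V \<inter> W = {})"
  proof (intro exI[of _ "range (\<lambda>x. Collect (R x))"] conjI ballI impI)
    show "finite (range (\<lambda>x. Collect (R x)))"
      using finite_open_classes[OF compact R opn] .
    show "\<Union>(range (\<lambda>x. Collect (R x))) = UNIV"
      using equivp_reflp[OF R] by blast
  next
    fix V
    assume "V \<in> range (\<lambda>x. Collect (R x))"
    then obtain x where V: "V = Collect (R x)" by blast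
    have "diameter V \<le> r/2"
      unfolding V using R small by (rule diameter_equivp_class_le)
    then show "\<exists>U\<in>\<U>. V \<subseteq> U"
      using lebesgue \<open>r > 0\<close> by simp
  next
    fix V W
    assume "V \<in> range (\<lambda>x. Collect (R x))" "W \<in> range (\<lambda>x. Collect (R x))" "V \<noteq> W"
    then obtain x y where "V = Collect (R x)" "W = Collect (R y)"
      by blast
    then show "V \<inter> W = {}"
      using equivp_Collect_eq[OF R, of x] equivp_Collect_eq[OF R, of y] \<open>V \<noteq> W\<close>
        equivp_symp[OF R] by blast
  qed (use opn in auto)
qed auto

section \<open>Invariant partitions into cycles of classes\<close>

lemma funpow_add_apply: "(f ^^ m) ((f ^^ n) x) = (f ^^ (m + n)) x"
  by (simp add: funpow_add)

locale invariant_partition =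
  fixes f :: "'a \<Rightarrow> 'a" and R :: "'a \<Rightarrow> 'a \<Rightarrow> bool"
  assumes equivp: "equivp R"
    and R_f_iff: "R (f a) (f b) \<longleftrightarrow> R a b"
    and recurrent: "\<exists>k\<ge>1. R ((f ^^ k) x) x"
begin

lemma R_refl: "R a a"
  using equivp by (rule equivp_reflp)

lemma R_sym: "R a b \<Longrightarrow> R b a"
  using equivp by (rule equivp_symp)

lemma R_trans: "R a b \<Longrightarrow> R b c \<Longrightarrow> R a c"
  using equivp by (rule equivp_transp)

lemma R_funpow_iff: "R ((f ^^ n) a) ((f ^^ n) b) \<longleftrightarrow> R a b"
  by (induction n) (simp_all add: R_f_iff)

lemma R_funpow_mult:
  assumes "R ((f ^^ k) x) x"
  shows "R ((f ^^ (k * n)) x) x"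
proof (induction n)
  case 0
  show ?case
    by (simp add: R_refl)
next
  case (Suc n)
  have "k * Suc n = k * n + k"
    by simp
  then have "(f ^^ (k * Suc n)) x = (f ^^ (k * n)) ((f ^^ k) x)"
    by (simp only: funpow_add_apply)
  moreover have "R ((f ^^ (k * n)) ((f ^^ k) x)) ((f ^^ (k * n)) x)"
    using assms R_funpow_iff by blast
  ultimately show ?case
    using Suc.IH R_trans by metis
qed

text \<open>f permutes the classes of R in cycles. The saturated orbit of x is the union of the cycle
  through its class; \<open>base\<close> picks a point of that cycle depending only on the cycle, \<open>period\<close> is
  the cycle length and \<open>entry_time x\<close> the position of the class of x in the cycle.\<close>
definition saturated_orbit :: "'a \<Rightarrow> 'a set" where
  "saturated_orbit x = {y. \<exists>i. R y ((f ^^ i) x)}"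

lemma saturated_orbit_cong: "R x y \<Longrightarrow> saturated_orbit x = saturated_orbit y"
  unfolding saturated_orbit_def using R_funpow_iff R_sym R_trans by metis

lemma saturated_orbit_f: "saturated_orbit (f x) = saturated_orbit x"
proof (intro equalityI subsetI)
  fix y
  assume "y \<in> saturated_orbit (f x)"
  then obtain i where "R y ((f ^^ i) (f x))"
    unfolding saturated_orbit_def by blast
  then have "R y ((f ^^ Suc i) x)"
    by (simp add: funpow_swap1)
  then show "y \<in> saturated_orbit x"
    unfolding saturated_orbit_def by blast
next
  fix y
  assume "y \<in> saturated_orbit x"
  then obtain i where i: "R y ((f ^^ i) x)"
    unfolding saturated_orbit_def by blast
  obtain k where "k \<ge> 1" and k: "R ((f ^^ k) ((f ^^ i) x)) ((f ^^ i) x)"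
    using recurrent by blast
  have "(f ^^ k) ((f ^^ i) x) = (f ^^ (k - 1 + i)) ((f ^^ 1) x)"
    using \<open>k \<ge> 1\<close> by (simp only: funpow_add_apply) simp
  then show "y \<in> saturated_orbit (f x)"
    unfolding saturated_orbit_def using R_trans[OF i R_sym[OF k]] by auto
qed

lemma saturated_orbit_returns:
  assumes "y \<in> saturated_orbit x"
  shows "\<exists>j. R ((f ^^ j) y) x"
proof -
  obtain i where i: "R y ((f ^^ i) x)"
    using assms unfolding saturated_orbit_def by blast
  obtain k where "k \<ge> 1" and k: "R ((f ^^ k) x) x"
    using recurrent by blast
  have "(f ^^ ((k - 1) * i)) ((f ^^ i) x) = (f ^^ (k * i)) x"
    using \<open>k \<ge> 1\<close> by (simp add: funpow_add_apply algebra_simps)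
  then have "R ((f ^^ ((k - 1) * i)) y) ((f ^^ (k * i)) x)"
    using i R_funpow_iff by metis
  then show ?thesis
    using R_trans R_funpow_mult[OF k] by blast
qed

definition base :: "'a \<Rightarrow> 'a" where
  "base x = (SOME b. b \<in> saturated_orbit x)"

lemma base_mem: "base x \<in> saturated_orbit x"
proof -
  have "x \<in> saturated_orbit x"
    unfolding saturated_orbit_def using R_refl[of x] by (auto intro: exI[of _ 0])
  then show ?thesis
    unfolding base_def by (rule someI)
qed

lemma base_cong: "R x y \<Longrightarrow> base x = base y"
  unfolding base_def by (simp only: saturated_orbit_cong)

lemma base_f: "base (f x) = base x"
  unfolding base_def by (simp add: saturated_orbit_f)

definition period :: "'a \<Rightarrow> nat" where
  "period b = (LEAST k. k \<ge> 1 \<and> R ((f ^^ k) b) b)"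

lemma period: "period b \<ge> 1" "R ((f ^^ period b) b) b"
  using LeastI_ex[OF recurrent[of b]] unfolding period_def by auto

lemma period_le: "k \<ge> 1 \<Longrightarrow> R ((f ^^ k) b) b \<Longrightarrow> period b \<le> k"
  unfolding period_def by (simp add: Least_le)

definition entry_time :: "'a \<Rightarrow> nat" where
  "entry_time x = (LEAST j. R ((f ^^ j) (base x)) x)"

lemma R_entry_time: "R ((f ^^ entry_time x) (base x)) x"
  unfolding entry_time_def using saturated_orbit_returns[OF base_mem] by (rule LeastI_ex)

lemma entry_time_le: "R ((f ^^ j) (base x)) x \<Longrightarrow> entry_time x \<le> j"
  unfolding entry_time_def by (rule Least_le)

lemma entry_time_cong: "R x y \<Longrightarrow> entry_time x = entry_time y"
  unfolding entry_time_def using base_cong R_sym R_trans by metis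

lemma entry_time_less_period: "entry_time x < period (base x)"
proof (rule ccontr)
  define b j k where "b = base x" and "j = entry_time x" and "k = period b"
  assume "\<not> entry_time x < period (base x)"
  then have "k \<le> j"
    by (simp add: b_def j_def k_def)
  then have "(f ^^ j) b = (f ^^ (j - k)) ((f ^^ k) b)"
    by (simp add: funpow_add_apply)
  then have "R ((f ^^ (j - k)) b) ((f ^^ j) b)"
    using period(2) R_funpow_iff R_sym unfolding k_def by metis
  then have "R ((f ^^ (j - k)) b) x"
    using R_entry_time R_trans unfolding b_def j_def by blast
  then have "j \<le> j - k"
    using entry_time_le unfolding b_def j_def by blast
  then show False
    using period(1)[of b] \<open>k \<le> j\<close> unfolding k_def by linarith
qed

lemma entry_time_f:
  "entry_time (f x) = (if Suc (entry_time x) = period (base x) then 0 else Suc (entry_time x))"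
proof -
  define b j where "b = base x" and "j = entry_time x"
  have b: "base (f x) = b"
    by (simp add: b_def base_f)
  have step: "R ((f ^^ Suc j) b) (f x)"
    using R_entry_time R_f_iff unfolding b_def j_def by simp
  show ?thesis
  proof (cases "Suc j = period b")
    case True
    then have "R ((f ^^ period b) b) (f x)"
      using step by simp
    then have "R b (f x)"
      using R_trans[OF R_sym[OF period(2)]] by blast
    then show ?thesis
      using entry_time_le[of 0 "f x"] True b by (simp add: b_def j_def)
  next
    case False
    then have "Suc j < period b"
      using entry_time_less_period unfolding b_def j_def by (simp add: Suc_lessI)
    have "entry_time (f x) \<noteq> 0"
    proof
      assume "entry_time (f x) = 0"
      then have "R b (f x)"
        using R_entry_time[of "f x"] b by simp
      then have "R ((f ^^ Suc j) b) b"
        using R_trans[OF step R_sym] by blast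
      then have "period b \<le> Suc j"
        by (simp add: period_le)
      then show False
        using \<open>Suc j < period b\<close> by simp
    qed
    then obtain t where t: "entry_time (f x) = Suc t"
      using not0_implies_Suc by blast
    then have "R (f ((f ^^ t) b)) (f x)"
      using R_entry_time[of "f x"] b by simp
    then have "j \<le> t"
      using entry_time_le R_f_iff unfolding b_def j_def by blast
    moreover have "Suc t \<le> Suc j"
      using entry_time_le[OF step[folded b]] t by simp
    ultimately show ?thesis
      using False t by (simp add: b_def j_def)
  qed
qed

definition shadow_map :: "('a \<Rightarrow> 'a) \<Rightarrow> 'a \<Rightarrow> 'a" where
  "shadow_map Q x = (f ^^ entry_time x) (Q (base x))"

lemma shadow_map_cong: "R x y \<Longrightarrow> shadow_map Q x = shadow_map Q y"
  unfolding shadow_map_def using base_cong entry_time_cong by metis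

lemma shadow_map_f:
  assumes "\<And>b. (f ^^ period b) (Q b) = Q b"
  shows "shadow_map Q (f x) = f (shadow_map Q x)"
proof (cases "Suc (entry_time x) = period (base x)")
  case True
  then have "f (shadow_map Q x) = Q (base x)"
    using assms[of "base x"] unfolding shadow_map_def by (metis comp_apply funpow.simps(2))
  then show ?thesis
    using True unfolding shadow_map_def by (simp add: entry_time_f base_f)
next
  case False
  then show ?thesis
    unfolding shadow_map_def by (simp add: entry_time_f base_f)
qed

end

section \<open>Chains of points with close orbits\<close>

definition orbit_close :: "('a::metric_space \<Rightarrow> 'a) \<Rightarrow> real \<Rightarrow> 'a \<Rightarrow> 'a \<Rightarrow> bool" where
  "orbit_close f \<rho> a b \<longleftrightarrow> (\<forall>n. dist ((f ^^ n) a) ((f ^^ n) b) \<le> \<rho>)"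

definition orbit_chain :: "('a::metric_space \<Rightarrow> 'a) \<Rightarrow> real \<Rightarrow> 'a \<Rightarrow> 'a \<Rightarrow> bool" where
  "orbit_chain f \<rho> = (orbit_close f \<rho>)\<^sup>*\<^sup>*"

lemma equivp_orbit_chain: "equivp (orbit_chain f \<rho>)"
proof -
  have "symp (orbit_close f \<rho>)"
    unfolding symp_def orbit_close_def by (simp add: dist_commute)
  then show ?thesis
    unfolding orbit_chain_def by (rule equivp_rtranclp)
qed

lemma orbit_close_f:
  assumes "orbit_close f \<rho> a b"
  shows "orbit_close f \<rho> (f a) (f b)"
  unfolding orbit_close_def
proof
  fix n
  show "dist ((f ^^ n) (f a)) ((f ^^ n) (f b)) \<le> \<rho>"
    using assms[unfolded orbit_close_def, rule_format, of "Suc n"] by (simp add: funpow_swap1)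
qed

lemma orbit_chain_f: "orbit_chain f \<rho> a b \<Longrightarrow> orbit_chain f \<rho> (f a) (f b)"
  unfolding orbit_chain_def
  by (induction rule: rtranclp_induct) (auto intro: rtranclp.rtrancl_into_rtrancl orbit_close_f)

lemma orbit_chain_funpow: "orbit_chain f \<rho> a b \<Longrightarrow> orbit_chain f \<rho> ((f ^^ n) a) ((f ^^ n) b)"
  by (induction n) (simp_all add: orbit_chain_f)

text \<open>Truncated subtraction keeps the index at 0 from time \<open>2 * k\<close> on.\<close>
definition zigzag_index :: "nat \<Rightarrow> nat \<Rightarrow> nat" where
  "zigzag_index k i = (if i \<le> k then i else 2 * k - i)"

lemma zigzag_index_Suc_cases:
  obtains "zigzag_index k (Suc i) = zigzag_index k i"
  | "zigzag_index k (Suc i) = Suc (zigzag_index k i)" "zigzag_index k i < k"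
  | "zigzag_index k i = Suc (zigzag_index k (Suc i))" "zigzag_index k (Suc i) < k"
proof (cases "Suc i \<le> k")
  case True
  then show ?thesis
    using that(2) unfolding zigzag_index_def by simp
next
  case False
  show ?thesis
  proof (cases "i < 2 * k")
    case True
    have "zigzag_index k i = Suc (zigzag_index k (Suc i))" "zigzag_index k (Suc i) < k"
      using \<open>\<not> Suc i \<le> k\<close> True unfolding zigzag_index_def by auto
    then show ?thesis
      by (rule that(3))
  next
    case False
    have "zigzag_index k (Suc i) = zigzag_index k i"
      using \<open>\<not> Suc i \<le> k\<close> False unfolding zigzag_index_def by auto
    then show ?thesis
      by (rule that(1))
  qed
qed

text \<open>The pseudo-orbit that follows the orbits of \<open>z 0, z 1, \<dots>, z k\<close> up to time k, steps back
  down to \<open>z 0\<close> by time \<open>2 * k\<close> and is closed up at time m.\<close>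
definition zigzag :: "('a \<Rightarrow> 'a) \<Rightarrow> (nat \<Rightarrow> 'a) \<Rightarrow> nat \<Rightarrow> nat \<Rightarrow> nat \<Rightarrow> 'a" where
  "zigzag f z k m i = (if i < m then (f ^^ i) (z (zigzag_index k i)) else z 0)"

lemma delta_cycle_zigzag:
  fixes f :: "'a::metric_space \<Rightarrow> 'a"
  assumes chain: "\<And>i. i < k \<Longrightarrow> orbit_close f \<delta> (z i) (z (Suc i))"
    and "2 * k < m" and closing: "dist ((f ^^ m) (z 0)) (z 0) \<le> \<delta>"
  shows "delta_cycle f \<delta> (zigzag f z k m) m"
  unfolding delta_cycle_def
proof (intro conjI allI impI)
  show "1 \<le> m" "zigzag f z k m 0 = zigzag f z k m m"
    using \<open>2 * k < m\<close> by (simp_all add: zigzag_def zigzag_index_def)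
  fix i
  assume "i < m"
  define t where "t = zigzag_index k"
  show "dist (f (zigzag f z k m i)) (zigzag f z k m (Suc i)) \<le> \<delta>"
  proof (cases "Suc i < m")
    case True
    then have f_zigzag: "f (zigzag f z k m i) = (f ^^ Suc i) (z (t i))"
      and zigzag_Suc: "zigzag f z k m (Suc i) = (f ^^ Suc i) (z (t (Suc i)))"
      by (simp_all add: zigzag_def t_def)
    show ?thesis
    proof (cases rule: zigzag_index_Suc_cases[of k i, folded t_def])
      case 1
      have "\<delta> \<ge> 0"
        using closing zero_le_dist order_trans by blast
      then show ?thesis
        using 1 f_zigzag zigzag_Suc by simp
    next
      case 2
      then show ?thesis
        using f_zigzag zigzag_Suc chain[of "t i", unfolded orbit_close_def, rule_format, of "Suc i"]
        by simp
    next
      case 3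
      then show ?thesis
        using f_zigzag zigzag_Suc chain[of "t (Suc i)", unfolded orbit_close_def, rule_format, of "Suc i"]
        by (simp add: dist_commute)
    qed
  next
    case False
    then have "Suc i = m"
      using \<open>i < m\<close> by simp
    moreover have "t i = 0"
      using \<open>Suc i = m\<close> \<open>2 * k < m\<close> unfolding t_def zigzag_index_def by auto
    ultimately have "f (zigzag f z k m i) = (f ^^ m) (z 0)" "zigzag f z k m (Suc i) = z 0"
      by (auto simp: zigzag_def t_def)
    then show ?thesis
      using closing by simp
  qed
qed

lemma periodic_shadow_of_orbit_segment:
  fixes f :: "'a::metric_space \<Rightarrow> 'a"
  assumes shadow: "\<And>xs m. delta_cycle f \<delta> xs m \<Longrightarrow>
      \<exists>p. (f ^^ m) p = p \<and> (\<forall>i\<le>m. dist (xs i) ((f ^^ i) p) \<le> e)"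
    and "k \<ge> 1" "dist ((f ^^ k) b) b \<le> \<delta>"
  obtains p where "(f ^^ k) p = p" "\<And>i. i < k \<Longrightarrow> dist ((f ^^ i) b) ((f ^^ i) p) \<le> e"
proof -
  have "delta_cycle f \<delta> (zigzag f (\<lambda>_. b) 0 k) k"
    using assms(2,3) by (intro delta_cycle_zigzag) auto
  then obtain p where "(f ^^ k) p = p"
    and p: "\<forall>i\<le>k. dist (zigzag f (\<lambda>_. b) 0 k i) ((f ^^ i) p) \<le> e"
    using shadow by blast
  moreover have "zigzag f (\<lambda>_. b) 0 k i = (f ^^ i) b" if "i < k" for i
    using that by (simp add: zigzag_def)
  ultimately show ?thesis
    using that by (metis less_imp_le_nat)
qed

lemma strict_periodic_shadowingE:
  assumes "strict_periodic_shadowing f" "e > 0"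
  obtains \<delta> where "\<delta> > 0" "\<And>xs m. delta_cycle f \<delta> xs m \<Longrightarrow>
    \<exists>p. (f ^^ m) p = p \<and> (\<forall>i\<le>m. dist (xs i) ((f ^^ i) p) \<le> e)"
  using assms unfolding strict_periodic_shadowing_def by blast

section \<open>Equicontinuous homeomorphisms of compact spaces\<close>

lemma is_homeo_bij: "is_homeo f \<Longrightarrow> bij f"
  unfolding is_homeo_def homeomorphism_def by (metis bij_betw_byWitness subset_UNIV)

lemma iter_int_uminus: "iter_int f (- int n) = inv f ^^ n"
  by (auto simp: iter_int_def)

lemma pigeonhole_restrict_nat:
  assumes "finite G" "\<And>n a. a \<in> G \<Longrightarrow> c n a \<in> G"
  obtains m n :: nat where "m < n" "\<And>a. a \<in> G \<Longrightarrow> c m a = c n a"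
proof -
  have "range (\<lambda>n. restrict (c n) G) \<subseteq> (\<Pi>\<^sub>E a\<in>G. G)"
    using assms(2) by auto
  then have "finite (range (\<lambda>n. restrict (c n) G))"
    by (rule finite_subset) (simp add: finite_PiE \<open>finite G\<close>)
  then have "\<not> inj (\<lambda>n. restrict (c n) G)"
    using finite_imageD infinite_UNIV_nat by blast
  then obtain m n where "m < n" and "restrict (c m) G = restrict (c n) G"
    unfolding inj_def by (metis linorder_neqE_nat)
  then show ?thesis
    using that by (metis restrict_apply')
qed

locale equicontinuous_system =
  fixes f :: "'a::metric_space \<Rightarrow> 'a"
  assumes compact: "compact (UNIV :: 'a set)"
    and homeo: "is_homeo f"
    and equicontinuous: "equicontinuous_homeo f"
begin

lemma bounded: "bounded (UNIV :: 'a set)"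
  using compact by (rule compact_imp_bounded)

lemma uniformly_equicontinuous_iter_int:
  assumes "e > 0"
  obtains d where "d > 0" "\<And>x y i. dist x y \<le> d \<Longrightarrow> dist (iter_int f i x) (iter_int f i y) \<le> e"
proof -
  obtain d where "d > 0" and d: "\<And>x y. dist x y \<le> d \<Longrightarrow>
      (SUP i::int. dist (iter_int f i x) (iter_int f i y)) \<le> e"
    using equicontinuous assms unfolding equicontinuous_homeo_def by blast
  show ?thesis
  proof (rule that[OF \<open>d > 0\<close>])
    fix x y :: 'a and i :: int
    assume "dist x y \<le> d"
    have "dist (iter_int f i x) (iter_int f i y) \<le> (SUP i::int. dist (iter_int f i x) (iter_int f i y))"
      using bdd_above_range_dist[OF bounded] by (rule cSUP_upper[OF UNIV_I])
    also have "\<dots> \<le> e"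
      using d \<open>dist x y \<le> d\<close> .
    finally show "dist (iter_int f i x) (iter_int f i y) \<le> e" .
  qed
qed

lemma uniformly_equicontinuous_funpow:
  assumes "e > 0"
  obtains d where "d > 0" "\<And>x y n. dist x y \<le> d \<Longrightarrow> dist ((f ^^ n) x) ((f ^^ n) y) \<le> e"
proof -
  obtain d where "d > 0" and d: "\<And>x y i. dist x y \<le> d \<Longrightarrow> dist (iter_int f i x) (iter_int f i y) \<le> e"
    using uniformly_equicontinuous_iter_int assms by blast
  show ?thesis
    using that[OF \<open>d > 0\<close>] d[of _ _ "int _"] by (simp add: iter_int_def)
qed

lemma uniformly_equicontinuous_funpow_inverse:
  assumes "e > 0"
  obtains d where "d > 0" "\<And>x y n. dist ((f ^^ n) x) ((f ^^ n) y) \<le> d \<Longrightarrow> dist x y \<le> e"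
proof -
  obtain d where "d > 0" and d: "\<And>x y i. dist x y \<le> d \<Longrightarrow> dist (iter_int f i x) (iter_int f i y) \<le> e"
    using uniformly_equicontinuous_iter_int assms by blast
  show ?thesis
  proof (rule that[OF \<open>d > 0\<close>])
    fix x y :: 'a and n
    assume "dist ((f ^^ n) x) ((f ^^ n) y) \<le> d"
    then have "dist ((inv f ^^ n) ((f ^^ n) x)) ((inv f ^^ n) ((f ^^ n) y)) \<le> e"
      using d[of _ _ "- int n"] by (simp add: iter_int_uminus)
    moreover have "(inv f ^^ n) ((f ^^ n) z) = z" for z
      using inv_fn_o_fn_is_id[OF is_homeo_bij[OF homeo], of n] by (metis comp_apply)
    ultimately show "dist x y \<le> e"
      by simp
  qed
qed

text \<open>By equicontinuity the iterates of f are determined up to \<open>\<eta>\<close> by where they send a finite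
  net, so by the pigeonhole principle two iterates in any sequence act alike.\<close>
lemma uniformly_close_iterates:
  fixes s :: "nat \<Rightarrow> nat"
  assumes "\<eta> > 0"
  obtains m n where "m < n" "\<And>q. dist ((f ^^ s m) q) ((f ^^ s n) q) \<le> \<eta>"
proof -
  obtain d where "d > 0" and d: "\<And>x y n. dist x y \<le> d \<Longrightarrow> dist ((f ^^ n) x) ((f ^^ n) y) \<le> \<eta>/3"
    using uniformly_equicontinuous_funpow[of "\<eta>/3"] assms by auto
  define \<gamma> where "\<gamma> = min d (\<eta>/3)"
  have "\<gamma> > 0"
    using \<open>d > 0\<close> assms by (simp add: \<gamma>_def)
  moreover have "\<forall>\<epsilon>>0. \<exists>G::'a set. finite G \<and> UNIV \<subseteq> (\<Union>a\<in>G. ball a \<epsilon>)"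
    using compact unfolding compact_eq_totally_bounded by blast
  ultimately obtain G :: "'a set" where "finite G" and G: "UNIV \<subseteq> (\<Union>a\<in>G. ball a (\<gamma>/2))"
    using half_gt_zero by blast
  define c where "c n a = (SOME b. b \<in> G \<and> dist b ((f ^^ s n) a) < \<gamma>/2)" for n a
  have c: "c n a \<in> G \<and> dist (c n a) ((f ^^ s n) a) < \<gamma>/2" for n a
  proof -
    have "\<exists>b. b \<in> G \<and> dist b ((f ^^ s n) a) < \<gamma>/2"
      using G by (auto simp: subset_eq)
    then show ?thesis
      unfolding c_def by (rule someI_ex)
  qed
  obtain m n where "m < n" and same: "\<And>a. a \<in> G \<Longrightarrow> c m a = c n a"
    using pigeonhole_restrict_nat[OF \<open>finite G\<close>, of c] c by blast
  show ?thesis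
  proof (rule that[OF \<open>m < n\<close>])
    fix q
    obtain a where "a \<in> G" and "dist a q < \<gamma>/2"
      using G by (auto simp: subset_eq)
    moreover have "\<gamma> \<le> d"
      by (simp add: \<gamma>_def)
    ultimately have "dist q a \<le> d"
      using \<open>\<gamma> > 0\<close> dist_commute[of q a] by linarith
    then have "dist ((f ^^ s m) q) ((f ^^ s m) a) \<le> \<eta>/3"
      and "dist ((f ^^ s n) q) ((f ^^ s n) a) \<le> \<eta>/3"
      using d by auto
    moreover have "dist ((f ^^ s m) a) ((f ^^ s n) a) < \<eta>/3"
      using c[of m a] c[of n a] same[OF \<open>a \<in> G\<close>] dist_triangle_half_r[of "c m a"]
      unfolding \<gamma>_def by fastforce
    ultimately show "dist ((f ^^ s m) q) ((f ^^ s n) q) \<le> \<eta>"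
      using dist_triangle[of "(f ^^ s m) q" "(f ^^ s n) q" "(f ^^ s m) a"]
        dist_triangle[of "(f ^^ s m) a" "(f ^^ s n) q" "(f ^^ s n) a"]
        dist_commute[of "(f ^^ s n) a" "(f ^^ s n) q"] by linarith
  qed
qed

lemma uniformly_recurrent:
  assumes "\<eta> > 0"
  obtains m where "m \<ge> L" "\<And>q. dist ((f ^^ m) q) q \<le> \<eta>"
proof -
  obtain m n where "m < n" and close: "\<And>q. dist ((f ^^ (L * m)) q) ((f ^^ (L * n)) q) \<le> \<eta>"
    using uniformly_close_iterates[OF assms, of "\<lambda>n. L * n"] by blast
  show ?thesis
  proof (rule that[of "L * (n - m)"])
    show "L * (n - m) \<ge> L"
      using \<open>m < n\<close> by auto
    fix r
    obtain q where q: "r = (f ^^ (L * m)) q"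
      using bij_is_surj[OF bij_fn[OF is_homeo_bij[OF homeo]]] by (metis surjD)
    have "L * (n - m) + L * m = L * n"
      using \<open>m < n\<close> by (simp add: diff_mult_distrib2)
    then have "(f ^^ (L * (n - m))) r = (f ^^ (L * n)) q"
      unfolding q by (simp add: funpow_add_apply)
    then show "dist ((f ^^ (L * (n - m))) r) r \<le> \<eta>"
      using close[of q] q by (simp add: dist_commute)
  qed
qed

lemma orbit_chain_near:
  assumes "\<rho> > 0"
  obtains \<tau> where "\<tau> > 0" "\<And>a b. dist a b \<le> \<tau> \<Longrightarrow> orbit_chain f \<rho> a b"
proof -
  obtain \<tau> where "\<tau> > 0" and "\<And>x y n. dist x y \<le> \<tau> \<Longrightarrow> dist ((f ^^ n) x) ((f ^^ n) y) \<le> \<rho>"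
    using uniformly_equicontinuous_funpow assms by blast
  then have "\<And>a b. dist a b \<le> \<tau> \<Longrightarrow> orbit_chain f \<rho> a b"
    unfolding orbit_chain_def orbit_close_def by blast
  then show ?thesis
    using that \<open>\<tau> > 0\<close> by blast
qed

lemma open_orbit_chain_class:
  assumes "\<rho> > 0"
  shows "open (Collect (orbit_chain f \<rho> x))"
  unfolding open_contains_ball
proof
  fix y
  assume "y \<in> Collect (orbit_chain f \<rho> x)"
  obtain \<tau> where "\<tau> > 0" and near: "\<And>a b. dist a b \<le> \<tau> \<Longrightarrow> orbit_chain f \<rho> a b"
    using orbit_chain_near assms by blast
  have "ball y \<tau> \<subseteq> Collect (orbit_chain f \<rho> x)"
  proof
    fix z
    assume "z \<in> ball y \<tau>"
    then have "orbit_chain f \<rho> y z"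
      by (intro near) simp
    then show "z \<in> Collect (orbit_chain f \<rho> x)"
      using \<open>y \<in> Collect (orbit_chain f \<rho> x)\<close> equivp_transp[OF equivp_orbit_chain] by blast
  qed
  then show "\<exists>\<epsilon>>0. ball y \<epsilon> \<subseteq> Collect (orbit_chain f \<rho> x)"
    using \<open>\<tau> > 0\<close> by blast
qed

lemma orbit_chain_recurrent:
  assumes "\<rho> > 0"
  obtains M where "M \<ge> 1" "\<And>x. orbit_chain f \<rho> ((f ^^ M) x) x"
proof -
  obtain \<tau> where "\<tau> > 0" and near: "\<And>a b. dist a b \<le> \<tau> \<Longrightarrow> orbit_chain f \<rho> a b"
    using orbit_chain_near assms by blast
  obtain M where "M \<ge> 1" "\<And>q. dist ((f ^^ M) q) q \<le> \<tau>"
    using uniformly_recurrent[OF \<open>\<tau> > 0\<close>] by blast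
  then show ?thesis
    using that near by blast
qed

lemma invariant_partition_orbit_chain:
  assumes "\<rho> > 0"
  shows "invariant_partition f (orbit_chain f \<rho>)"
proof
  obtain M where "M \<ge> 1" and M: "\<And>x. orbit_chain f \<rho> ((f ^^ M) x) x"
    using orbit_chain_recurrent assms by blast
  have sym: "orbit_chain f \<rho> a b \<Longrightarrow> orbit_chain f \<rho> b a"
    and trans: "orbit_chain f \<rho> a b \<Longrightarrow> orbit_chain f \<rho> b c \<Longrightarrow> orbit_chain f \<rho> a c" for a b c
    using equivp_symp[OF equivp_orbit_chain] equivp_transp[OF equivp_orbit_chain] by blast+
  show "equivp (orbit_chain f \<rho>)"
    by (rule equivp_orbit_chain)
  show "\<exists>k\<ge>1. orbit_chain f \<rho> ((f ^^ k) x) x" for x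
    using \<open>M \<ge> 1\<close> M by blast
  show "orbit_chain f \<rho> (f a) (f b) \<longleftrightarrow> orbit_chain f \<rho> a b" for a b
  proof
    assume "orbit_chain f \<rho> (f a) (f b)"
    then have "orbit_chain f \<rho> ((f ^^ (M - 1)) (f a)) ((f ^^ (M - 1)) (f b))"
      by (rule orbit_chain_funpow)
    moreover have "(f ^^ (M - 1)) (f z) = (f ^^ M) z" for z
      using \<open>M \<ge> 1\<close> funpow_add_apply[of "M - 1" f 1 z] by simp
    ultimately have "orbit_chain f \<rho> ((f ^^ M) a) ((f ^^ M) b)"
      by simp
    then show "orbit_chain f \<rho> a b"
      using M sym trans by metis
  qed (rule orbit_chain_f)
qed

lemma orbit_chain_small:
  assumes "strict_periodic_shadowing f" "e > 0"
  obtains \<rho> where "\<rho> > 0" "\<And>a b. orbit_chain f \<rho> a b \<Longrightarrow> dist a b \<le> e"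
proof -
  obtain d where "d > 0" and backward: "\<And>x y k. dist ((f ^^ k) x) ((f ^^ k) y) \<le> d \<Longrightarrow> dist x y \<le> e"
    using uniformly_equicontinuous_funpow_inverse assms(2) by blast
  obtain d' where "d' > 0" and forward: "\<And>x y n. dist x y \<le> d' \<Longrightarrow> dist ((f ^^ n) x) ((f ^^ n) y) \<le> d/2"
    using uniformly_equicontinuous_funpow[of "d/2"] \<open>d > 0\<close> by auto
  obtain \<rho> where "\<rho> > 0" and shadow: "\<And>xs m. delta_cycle f \<rho> xs m \<Longrightarrow>
      \<exists>p. (f ^^ m) p = p \<and> (\<forall>i\<le>m. dist (xs i) ((f ^^ i) p) \<le> min d' (d/2))"
    using strict_periodic_shadowingE[OF assms(1), of "min d' (d/2)"] \<open>d > 0\<close> \<open>d' > 0\<close> by auto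
  show ?thesis
  proof (rule that[OF \<open>\<rho> > 0\<close>])
    fix a b
    assume "orbit_chain f \<rho> a b"
    then obtain k z where "z 0 = a" "z k = b" and chain: "\<And>i. i < k \<Longrightarrow> orbit_close f \<rho> (z i) (z (Suc i))"
      unfolding orbit_chain_def by (metis rtranclp_imp_relpowp relpowp_fun_conv)
    obtain m where "m \<ge> 2 * k + 1" and closing: "dist ((f ^^ m) a) a \<le> \<rho>"
      using uniformly_recurrent[OF \<open>\<rho> > 0\<close>] by blast
    then have "delta_cycle f \<rho> (zigzag f z k m) m"
      using chain \<open>z 0 = a\<close> by (intro delta_cycle_zigzag) auto
    then obtain p where p: "\<And>i. i \<le> m \<Longrightarrow> dist (zigzag f z k m i) ((f ^^ i) p) \<le> min d' (d/2)"
      using shadow by blast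
    have "dist a p \<le> d'"
      using p[of 0] \<open>m \<ge> 2 * k + 1\<close> \<open>z 0 = a\<close> by (simp add: zigzag_def zigzag_index_def)
    then have "dist ((f ^^ k) a) ((f ^^ k) p) \<le> d/2"
      by (rule forward)
    moreover have "dist ((f ^^ k) b) ((f ^^ k) p) \<le> d/2"
      using p[of k] \<open>m \<ge> 2 * k + 1\<close> \<open>z k = b\<close> by (simp add: zigzag_def zigzag_index_def)
    ultimately have "dist ((f ^^ k) a) ((f ^^ k) b) \<le> d"
      using dist_triangle[of "(f ^^ k) a" "(f ^^ k) b" "(f ^^ k) p"]
        dist_commute[of "(f ^^ k) p" "(f ^^ k) b"] by linarith
    then show "dist a b \<le> e"
      by (rule backward)
  qed
qed

lemma covering_dim_zero:
  assumes "strict_periodic_shadowing f"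
  shows "covering_dim_zero TYPE('a)"
proof (rule covering_dim_zeroI_open_equivp[OF compact])
  fix e :: real
  assume "e > 0"
  then obtain \<rho> where "\<rho> > 0" "\<And>a b. orbit_chain f \<rho> a b \<Longrightarrow> dist a b \<le> e"
    using orbit_chain_small assms by blast
  then show "\<exists>R::'a \<Rightarrow> 'a \<Rightarrow> bool. equivp R \<and> (\<forall>x. open (Collect (R x))) \<and> (\<forall>x y. R x y \<longrightarrow> dist x y \<le> e)"
    using equivp_orbit_chain open_orbit_chain_class by blast
qed

lemma topologically_stable:
  assumes "strict_periodic_shadowing f"
  shows "topologically_stable f"
proof (rule topologically_stableI_locally_constant[OF bounded])
  fix \<epsilon> :: real
  assume "\<epsilon> > 0"
  obtain \<delta> where "\<delta> > 0" and shadow: "\<And>xs m. delta_cycle f \<delta> xs m \<Longrightarrow>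
      \<exists>p. (f ^^ m) p = p \<and> (\<forall>i\<le>m. dist (xs i) ((f ^^ i) p) \<le> \<epsilon>/2)"
    using strict_periodic_shadowingE[OF assms, of "\<epsilon>/2"] \<open>\<epsilon> > 0\<close> by auto
  obtain \<rho> where "\<rho> > 0" and small: "\<And>a b. orbit_chain f \<rho> a b \<Longrightarrow> dist a b \<le> min \<delta> (\<epsilon>/2)"
    using orbit_chain_small[OF assms, of "min \<delta> (\<epsilon>/2)"] \<open>\<delta> > 0\<close> \<open>\<epsilon> > 0\<close> by auto
  interpret invariant_partition f "orbit_chain f \<rho>"
    using \<open>\<rho> > 0\<close> by (rule invariant_partition_orbit_chain)
  obtain \<tau> where "\<tau> > 0" and near: "\<And>a b. dist a b \<le> \<tau> \<Longrightarrow> orbit_chain f \<rho> a b"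
    using orbit_chain_near \<open>\<rho> > 0\<close> by blast
  have "\<exists>p. (f ^^ period b) p = p \<and> (\<forall>i<period b. dist ((f ^^ i) b) ((f ^^ i) p) \<le> \<epsilon>/2)" for b
  proof -
    have "dist ((f ^^ period b) b) b \<le> \<delta>"
      using small[OF period(2)] by simp
    then show ?thesis
      using periodic_shadow_of_orbit_segment[OF shadow period(1)[of b]] by blast
  qed
  then obtain Q where Q: "\<And>b. (f ^^ period b) (Q b) = Q b"
    and Q_near: "\<And>b i. i < period b \<Longrightarrow> dist ((f ^^ i) b) ((f ^^ i) (Q b)) \<le> \<epsilon>/2"
    by metis
  show "\<exists>\<tau>>0. \<exists>h. (\<forall>x y. dist x y < \<tau> \<longrightarrow> h x = h y) \<and> (\<forall>x. dist (h x) x \<le> \<epsilon>) \<and> h \<circ> f = f \<circ> h"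
  proof (intro exI conjI allI impI)
    show "shadow_map Q x = shadow_map Q y" if "dist x y < \<tau>" for x y
      using that near by (intro shadow_map_cong) simp
    show "dist (shadow_map Q x) x \<le> \<epsilon>" for x
    proof -
      define y where "y = (f ^^ entry_time x) (base x)"
      have "dist y (shadow_map Q x) \<le> \<epsilon>/2"
        using Q_near[OF entry_time_less_period] unfolding y_def shadow_map_def .
      moreover have "dist y x \<le> \<epsilon>/2"
        using small[OF R_entry_time] unfolding y_def by simp
      ultimately show ?thesis
        using dist_triangle3[of "shadow_map Q x" x y] by linarith
    qed
    show "shadow_map Q \<circ> f = f \<circ> shadow_map Q"
      using shadow_map_f[OF Q] by auto
  qed (rule \<open>\<tau> > 0\<close>)
qed

end

theorem theorem1p2:
  fixes f :: "'a::metric_space \<Rightarrow> 'a"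
  assumes "compact (UNIV :: 'a set)"
    and "is_homeo f"
    and "equicontinuous_homeo f"
    and "strict_periodic_shadowing f"
  shows "topologically_stable f \<and> covering_dim_zero TYPE('a)"
proof -
  interpret equicontinuous_system f
    using assms(1-3) by unfold_locales
  show ?thesis
    using topologically_stable covering_dim_zero assms(4) by blast
qed

end
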